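(* Fix $p\ge 3$ and let $\lambda=\lambda_p=2\cos(\pi/p)$. Suppose that $\alpha$ and $\beta$ are hyperbolic fixed points of $G_p$ with associated hyperbolic $\lambda$-BQFs $Q_\alpha$ and $Q_\beta$, and let $V\in G_p$. Then $Q_\beta=Q_\alpha\circ V$ if and only if $\beta=V^{-1}\alpha$.
   Context: Let $S=\begin{pmatrix}1&\lambda\\0&1\end{pmatrix}$, $T=\begin{pmatrix}0&-1\\1&0\end{pmatrix}$, and $G_p=\langle S,T\rangle/\{\pm I\}$ (the Hecke group), acting on $\mathbb{C}\cup\{\infty\}$ by linear fractional transformations $z\mapsto\frac{az+b}{cz+d}$. An element $\begin{pmatrix}a&b\\c&d\end{pmatrix}$ is hyperbolic if $|a+d|>2$; a hyperbolic fixed point is a real number fixed by a hyperbolic element of $G_p$. A $\lambda$-BQF is a binary quadratic form $Q(x,y)=Ax^2+Bxy+Cy^2$, written $[A,B,C]$, with $A,B,C\in\mathbb{Z}[\lambda]$; its discriminant is $D=B^2-4AC$. For $M=\begin{pmatrix}a&b\\c&d\end{pmatrix}\in G_p$, $(Q\circ M)(x,y)=Q(ax+by,cx+dy)$. For a hyperbolic fixed point $\alpha$, choose a matrix $\begin{pmatrix}a&b\\c&d\end{pmatrix}$ representing a generator of the (cyclic) stabilizer of $\alpha$ in $G_p$, replaced by its inverse if necessary so that $\alpha=\frac{a-d+\sqrt{D}}{2c}$ where $D=(a+d)^2-4$ and $\sqrt{D}>0$; then $Q_\alpha=[c,d-a,-b]$ (this is independent of the choices). Such forms are called hyperbolic $\lambda$-BQFs.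 *)

theory Defs
  imports Complex_Main
begin

datatype mat2 = M2 real real real real

fun mmul :: "mat2 \<Rightarrow> mat2 \<Rightarrow> mat2" where
  "mmul (M2 a b c d) (M2 e f g h) = M2 (a*e+b*g) (a*f+b*h) (c*e+d*g) (c*f+d*h)"

text \<open>Inverse of a determinant-one matrix (all matrices in the Hecke group have det 1).\<close>
fun minv :: "mat2 \<Rightarrow> mat2" where
  "minv (M2 a b c d) = M2 d (-b) (-c) a"

fun mneg :: "mat2 \<Rightarrow> mat2" where
  "mneg (M2 a b c d) = M2 (-a) (-b) (-c) (-d)"

fun mtrace :: "mat2 \<Rightarrow> real" where
  "mtrace (M2 a b c d) = a + d"

definition mid :: mat2 where "mid = M2 1 0 0 1"

definition lam :: "nat \<Rightarrow> real" where "lam p = 2 * cos (pi / real p)"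

definition Smat :: "nat \<Rightarrow> mat2" where "Smat p = M2 1 (lam p) 0 1"

definition Tmat :: mat2 where "Tmat = M2 0 (-1) 1 0"

text \<open>Matrices of the group generated by S and T in SL(2,R); the Hecke group G_p is
  this group modulo {+I,-I}.\<close>
inductive_set hecke_mats :: "nat \<Rightarrow> mat2 set" for p :: nat where
  hm_id: "mid \<in> hecke_mats p"
| hm_S: "M \<in> hecke_mats p \<Longrightarrow> mmul M (Smat p) \<in> hecke_mats p"
| hm_T: "M \<in> hecke_mats p \<Longrightarrow> mmul M Tmat \<in> hecke_mats p"
| hm_Si: "M \<in> hecke_mats p \<Longrightarrow> mmul M (minv (Smat p)) \<in> hecke_mats p"
| hm_Ti: "M \<in> hecke_mats p \<Longrightarrow> mmul M (minv Tmat) \<in> hecke_mats p"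

primrec mpow :: "mat2 \<Rightarrow> nat \<Rightarrow> mat2" where
  "mpow M 0 = mid"
| "mpow M (Suc n) = mmul M (mpow M n)"

definition mzpow :: "mat2 \<Rightarrow> int \<Rightarrow> mat2" where
  "mzpow M n = (if n \<ge> 0 then mpow M (nat n) else mpow (minv M) (nat (- n)))"

text \<open>Action by linear fractional transformations on R \<union> {\<infinity>}; None stands for \<infinity>.\<close>
fun moeb :: "mat2 \<Rightarrow> real option \<Rightarrow> real option" where
  "moeb (M2 a b c d) None = (if c = 0 then None else Some (a / c))"
| "moeb (M2 a b c d) (Some x) =
     (if c * x + d = 0 then None else Some ((a * x + b) / (c * x + d)))"

definition hyperbolic :: "mat2 \<Rightarrow> bool" where
  "hyperbolic M \<longleftrightarrow> \<bar>mtrace M\<bar> > 2"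

definition hyp_fixed_point :: "nat \<Rightarrow> real \<Rightarrow> bool" where
  "hyp_fixed_point p \<alpha> \<longleftrightarrow>
     (\<exists>M \<in> hecke_mats p. hyperbolic M \<and> moeb M (Some \<alpha>) = Some \<alpha>)"

text \<open>M represents a generator of the (cyclic) stabilizer of \<alpha> in G_p = group / {+I,-I}.\<close>
definition stab_generator :: "nat \<Rightarrow> real \<Rightarrow> mat2 \<Rightarrow> bool" where
  "stab_generator p \<alpha> M \<longleftrightarrow>
     M \<in> hecke_mats p \<and> moeb M (Some \<alpha>) = Some \<alpha> \<and>
     (\<forall>N \<in> hecke_mats p. moeb N (Some \<alpha>) = Some \<alpha> \<longrightarrow>
        (\<exists>n::int. N = mzpow M n \<or> N = mneg (mzpow M n)))"

type_synonym bqf = "real \<times> real \<times> real"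

definition bqf_eval :: "bqf \<Rightarrow> real \<Rightarrow> real \<Rightarrow> real" where
  "bqf_eval Q x y = (case Q of (A, B, C) \<Rightarrow> A * x^2 + B * x * y + C * y^2)"

text \<open>(Q o M)(x,y) = Q(ax+by, cx+dy), as coefficient triple.\<close>
fun bqf_comp :: "bqf \<Rightarrow> mat2 \<Rightarrow> bqf" where
  "bqf_comp (A, B, C) (M2 a b c d) =
     (A*a^2 + B*a*c + C*c^2, 2*A*a*b + B*(a*d + b*c) + 2*C*c*d, A*b^2 + B*b*d + C*d^2)"

definition hyp_bqf :: "nat \<Rightarrow> real \<Rightarrow> bqf" where
  "hyp_bqf p \<alpha> = (THE Q. \<exists>a b c d.
      stab_generator p \<alpha> (M2 a b c d) \<and> c \<noteq> 0 \<and> (a + d)^2 - 4 > 0 \<and>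
      \<alpha> = (a - d + sqrt ((a + d)^2 - 4)) / (2 * c) \<and> Q = (c, d - a, - b))"

end

theory Submission
  imports Defs
begin

text \<open>
  The form \<open>Q\<^sub>\<alpha>\<close> is read off a generator \<open>M\<close> of the stabilizer of \<open>\<alpha>\<close>, and \<open>\<alpha>\<close> is the
  root of \<open>Q\<^sub>\<alpha>(t, 1)\<close> selected by the sign of the square root. Conjugating \<open>M\<close> by \<open>V\<close>
  gives a generator of the stabilizer of \<open>V\<^sup>-\<^sup>1\<alpha>\<close> with form \<open>Q\<^sub>\<alpha> \<circ> V\<close>, whose selected root
  is \<open>V\<^sup>-\<^sup>1\<alpha>\<close>; uniqueness of the attached form gives one implication, reading off the
  root the other.

  The substance is that the stabilizer is infinite cyclic modulo \<open>\<plusminus>I\<close>, so that \<open>Q\<^sub>\<alpha>\<close> is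
  well defined. Every element of \<open>G\<^sub>p\<close> is \<open>\<plusminus>T\<^sup>l X T\<^sup>r\<close> with \<open>X\<close> a product of matrices
  \<open>S (T S)\<^sup>k\<^sup>-\<^sup>1\<close>, \<open>1 \<le> k < p\<close>, whose entries \<open>sin (j \<pi>/p) / sin (\<pi>/p)\<close> are \<open>0\<close> or \<open>\<ge> 1\<close>;
  so lower-left entries are \<open>0\<close> or of absolute value \<open>\<ge> 1\<close>. Hence parabolic elements
  fixing a hyperbolic fixed point are trivial (conjugation by a hyperbolic element would
  shrink their lower-left entry), the stabilizer is abelian, its multipliers are bounded
  away from \<open>1\<close>, and an element of least multiplier \<open>> 1\<close> generates it.
\<close>

section \<open>Matrix algebra\<close>

fun mdet :: "mat2 \<Rightarrow> real" where
  "mdet (M2 a b c d) = a * d - b * c"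

lemma mmul_assoc: "mmul (mmul A B) C = mmul A (mmul B C)"
  by (cases A; cases B; cases C) (simp add: algebra_simps)

lemma mmul_mid_left [simp]: "mmul mid A = A"
  by (cases A) (simp add: mid_def)

lemma mmul_mid_right [simp]: "mmul A mid = A"
  by (cases A) (simp add: mid_def)

lemma mdet_mmul: "mdet (mmul A B) = mdet A * mdet B"
  by (cases A; cases B) (simp add: algebra_simps)

lemma mmul_minv_right: "mdet A = 1 \<Longrightarrow> mmul A (minv A) = mid"
  by (cases A) (simp add: mid_def algebra_simps)

lemma mmul_minv_left: "mdet A = 1 \<Longrightarrow> mmul (minv A) A = mid"
  by (cases A) (simp add: mid_def algebra_simps)

lemma mmul_minv_left_cancel: "mdet A = 1 \<Longrightarrow> mmul (minv A) (mmul A B) = B"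
  by (simp add: mmul_assoc[symmetric] mmul_minv_left)

lemma mmul_minv_right_cancel: "mdet A = 1 \<Longrightarrow> mmul A (mmul (minv A) B) = B"
  by (simp add: mmul_assoc[symmetric] mmul_minv_right)

lemma minv_minv [simp]: "minv (minv A) = A"
  by (cases A) simp

lemma minv_mmul: "minv (mmul A B) = mmul (minv B) (minv A)"
  by (cases A; cases B) (simp add: algebra_simps)

lemma minv_mid [simp]: "minv mid = mid"
  by (simp add: mid_def)

lemma mdet_minv [simp]: "mdet (minv A) = mdet A"
  by (cases A) (simp add: algebra_simps)

lemma mneg_mneg [simp]: "mneg (mneg A) = A"
  by (cases A) simp

lemma mmul_mneg_left: "mmul (mneg A) B = mneg (mmul A B)"
  by (cases A; cases B) (simp add: algebra_simps)

lemma mmul_mneg_right: "mmul A (mneg B) = mneg (mmul A B)"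
  by (cases A; cases B) (simp add: algebra_simps)

definition mconj :: "mat2 \<Rightarrow> mat2 \<Rightarrow> mat2" where
  "mconj V M = mmul (mmul (minv V) M) V"

lemma mtrace_mconj: "mtrace (mconj V M) = mtrace M * mdet V"
  by (cases M; cases V) (simp add: mconj_def algebra_simps)

lemma mconj_mmul: "mdet V = 1 \<Longrightarrow> mconj V (mmul A B) = mmul (mconj V A) (mconj V B)"
  by (simp add: mconj_def mmul_assoc mmul_minv_right_cancel)

lemma mconj_mid: "mdet V = 1 \<Longrightarrow> mconj V mid = mid"
  by (simp add: mconj_def mmul_minv_left)

lemma mconj_minv: "minv (mconj V M) = mconj V (minv M)"
  by (simp add: mconj_def minv_mmul mmul_assoc)

lemma mconj_mneg: "mconj V (mneg M) = mneg (mconj V M)"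
  by (simp add: mconj_def mmul_mneg_left mmul_mneg_right)

lemma mconj_mconj_minv: "mdet V = 1 \<Longrightarrow> mconj V (mconj (minv V) N) = N"
  by (simp add: mconj_def mmul_assoc mmul_minv_left_cancel mmul_minv_left)

lemma mdet_mpow: "mdet M = 1 \<Longrightarrow> mdet (mpow M n) = 1"
  by (induction n) (simp_all add: mdet_mmul mid_def)

lemma mdet_mzpow: "mdet M = 1 \<Longrightarrow> mdet (mzpow M k) = 1"
  by (simp add: mzpow_def mdet_mpow)

lemma mconj_mzpow: "mdet V = 1 \<Longrightarrow> mzpow (mconj V M) k = mconj V (mzpow M k)"
proof -
  assume V: "mdet V = 1"
  have "mpow (mconj V A) n = mconj V (mpow A n)" for A n
    by (induction n) (simp_all add: V mconj_mid mconj_mmul)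
  then show ?thesis by (simp add: mzpow_def mconj_minv)
qed

lemma mzpow_minv: "mzpow (minv M) k = mzpow M (- k)"
  by (cases "k = 0") (auto simp: mzpow_def)

section \<open>The Hecke group\<close>

lemma hecke_mats_mdet: "M \<in> hecke_mats p \<Longrightarrow> mdet M = 1"
  by (induction rule: hecke_mats.induct) (auto simp: mdet_mmul Smat_def Tmat_def mid_def)

lemma hecke_mats_mmul:
  assumes "A \<in> hecke_mats p" and "B \<in> hecke_mats p" shows "mmul A B \<in> hecke_mats p"
  using assms(2) by induction (simp_all add: assms(1) hecke_mats.intros mmul_assoc[symmetric])

lemma hecke_mats_generators:
  "Smat p \<in> hecke_mats p" "Tmat \<in> hecke_mats p"
  "minv (Smat p) \<in> hecke_mats p" "minv Tmat \<in> hecke_mats p"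
  using hecke_mats.intros(2-5)[OF hecke_mats.hm_id, of p] by simp_all

lemma hecke_mats_minv: "A \<in> hecke_mats p \<Longrightarrow> minv A \<in> hecke_mats p"
  by (induction rule: hecke_mats.induct)
    (simp_all add: hecke_mats.hm_id minv_mmul hecke_mats_mmul hecke_mats_generators)

lemma mmul_Tmat_Tmat: "mmul Tmat Tmat = mneg mid"
  by (simp add: Tmat_def mid_def)

lemma hecke_mats_mneg: "A \<in> hecke_mats p \<Longrightarrow> mneg A \<in> hecke_mats p"
  using hecke_mats_mmul[OF hecke_mats_mmul hecke_mats_generators(2), of A p Tmat]
  by (simp add: hecke_mats_generators mmul_assoc mmul_Tmat_Tmat mmul_mneg_right)

lemma hecke_mats_mconj: "V \<in> hecke_mats p \<Longrightarrow> M \<in> hecke_mats p \<Longrightarrow> mconj V M \<in> hecke_mats p"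
  unfolding mconj_def by (intro hecke_mats_mmul hecke_mats_minv)

lemma hecke_mats_mzpow: "M \<in> hecke_mats p \<Longrightarrow> mzpow M k \<in> hecke_mats p"
proof -
  have "A \<in> hecke_mats p \<Longrightarrow> mpow A n \<in> hecke_mats p" for A n
    by (induction n) (simp_all add: hecke_mats.hm_id hecke_mats_mmul)
  then show "M \<in> hecke_mats p \<Longrightarrow> mzpow M k \<in> hecke_mats p"
    by (simp add: mzpow_def hecke_mats_minv)
qed

section \<open>Discreteness of the Hecke group\<close>

definition sin_ratio :: "nat \<Rightarrow> nat \<Rightarrow> real" where
  "sin_ratio p k = sin (real k * pi / real p) / sin (pi / real p)"

lemma sin_pi_div_pos: "p \<ge> 3 \<Longrightarrow> sin (pi / real p) > 0"
  by (rule sin_gt_zero) (auto simp: field_simps)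

lemma sin_ratio_0 [simp]: "sin_ratio p 0 = 0"
  by (simp add: sin_ratio_def)

lemma sin_ratio_1: "p \<ge> 3 \<Longrightarrow> sin_ratio p 1 = 1"
  using sin_pi_div_pos[of p] by (simp add: sin_ratio_def)

lemma sin_ratio_Suc_Suc:
  assumes "p \<ge> 3"
  shows "sin_ratio p (Suc (Suc k)) = lam p * sin_ratio p (Suc k) - sin_ratio p k"
proof -
  define t where "t = pi / real p"
  define x where "x = real (Suc k) * t"
  have split: "real (Suc (Suc k)) * pi / real p = x + t" "real k * pi / real p = x - t"
    "real (Suc k) * pi / real p = x"
    using assms by (simp_all add: x_def t_def field_simps)
  have "sin (x + t) = 2 * cos t * sin x - sin (x - t)"
    by (simp add: sin_add sin_diff algebra_simps)
  moreover have "sin t > 0"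
    using sin_pi_div_pos[OF assms] by (simp add: t_def)
  ultimately show ?thesis
    unfolding sin_ratio_def lam_def split t_def[symmetric] by (simp add: field_simps)
qed

lemma sin_ratio_self: "sin_ratio p p = 0"
  by (simp add: sin_ratio_def)

lemma sin_ratio_reflect:
  assumes "p \<ge> 3" and "k \<le> p"
  shows "sin_ratio p (p - k) = sin_ratio p k"
proof -
  have "real (p - k) * pi / real p = pi - real k * pi / real p"
    using assms by (simp add: of_nat_diff field_simps)
  then show ?thesis by (simp add: sin_ratio_def)
qed

lemma sin_ratio_Suc_self: "p \<ge> 3 \<Longrightarrow> sin_ratio p (Suc p) = - 1"
proof -
  assume "p \<ge> 3"
  moreover have "real (Suc p) * pi / real p = pi + pi / real p"
    using \<open>p \<ge> 3\<close> by (simp add: field_simps)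
  ultimately show ?thesis
    using sin_pi_div_pos[of p] by (simp add: sin_ratio_def)
qed

lemma sin_ratio_ge_1:
  assumes "p \<ge> 3" and "1 \<le> k" and "k < p"
  shows "sin_ratio p k \<ge> 1"
proof -
  define j where "j = min k (p - k)"
  have "sin_ratio p k = sin_ratio p j"
    using sin_ratio_reflect[of p k] assms by (simp add: j_def min_def)
  moreover have "sin (pi / real p) \<le> sin (real j * pi / real p)"
  proof (rule sin_monotone_2pi_le)
    have "1 \<le> real j" "2 * real j \<le> real p"
      using assms by (auto simp: j_def min_def)
    then show "pi / real p \<le> real j * pi / real p" "real j * pi / real p \<le> pi / 2"
      using assms by (simp_all add: field_simps)
  qed (use assms in \<open>auto intro: order_trans[of _ 0]\<close>)
  ultimately show ?thesis
    using sin_pi_div_pos[OF assms(1)] by (simp add: sin_ratio_def)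
qed

definition gapped :: "real \<Rightarrow> bool" where
  "gapped x \<longleftrightarrow> x = 0 \<or> 1 \<le> x"

lemma gapped_add: "gapped x \<Longrightarrow> gapped y \<Longrightarrow> gapped (x + y)"
  by (auto simp: gapped_def)

lemma gapped_mult: "gapped x \<Longrightarrow> gapped y \<Longrightarrow> gapped (x * y)"
  by (auto simp: gapped_def intro: order_trans[OF _ mult_mono, of _ "1 * 1"])

lemma sin_ratio_gapped: "p \<ge> 3 \<Longrightarrow> k \<le> p \<Longrightarrow> gapped (sin_ratio p k)"
  using sin_ratio_ge_1[of p k] sin_ratio_self[of p]
  by (cases "k = 0 \<or> k = p") (auto simp: gapped_def)

fun gapped_mat :: "mat2 \<Rightarrow> bool" where
  "gapped_mat (M2 a b c d) \<longleftrightarrow> gapped a \<and> gapped b \<and> gapped c \<and> gapped d"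

lemma gapped_mat_mmul: "gapped_mat A \<Longrightarrow> gapped_mat B \<Longrightarrow> gapped_mat (mmul A B)"
  by (cases A; cases B) (simp add: gapped_add gapped_mult)

text \<open>\<open>hecke_block p k = S (T S)\<^sup>k\<^sup>-\<^sup>1\<close>, written out through the recurrence of \<open>sin_ratio\<close>.\<close>
definition hecke_block :: "nat \<Rightarrow> nat \<Rightarrow> mat2" where
  "hecke_block p k =
     M2 (sin_ratio p k) (sin_ratio p (Suc k)) (sin_ratio p (k - 1)) (sin_ratio p k)"

lemma hecke_block_gapped:
  "p \<ge> 3 \<Longrightarrow> 1 \<le> k \<Longrightarrow> k < p \<Longrightarrow> gapped_mat (hecke_block p k)"
  by (simp add: hecke_block_def sin_ratio_gapped)

lemma hecke_block_1: "p \<ge> 3 \<Longrightarrow> hecke_block p 1 = Smat p"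
  using sin_ratio_1[of p] sin_ratio_Suc_Suc[of p 0] by (simp add: hecke_block_def Smat_def)

lemma hecke_block_Suc:
  assumes "p \<ge> 3" and "1 \<le> k"
  shows "mmul (mmul (hecke_block p k) Tmat) (Smat p) = hecke_block p (Suc k)"
proof -
  obtain j where "k = Suc j" using assms by (cases k) auto
  then show ?thesis
    using sin_ratio_Suc_Suc[OF assms(1), of j] sin_ratio_Suc_Suc[OF assms(1), of "Suc j"]
    by (simp add: hecke_block_def Tmat_def Smat_def algebra_simps)
qed

lemma hecke_block_self: "p \<ge> 3 \<Longrightarrow> hecke_block p p = Tmat"
  using sin_ratio_self[of p] sin_ratio_Suc_self[of p] sin_ratio_reflect[of p 1] sin_ratio_1[of p]
  by (simp add: hecke_block_def Tmat_def)

lemma minv_Tmat: "minv Tmat = mneg Tmat"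
  by (simp add: Tmat_def)

lemma minv_Smat_eq:
  assumes "p \<ge> 3"
  shows "minv (Smat p) = mneg (mmul (mmul Tmat (hecke_block p (p - 1))) Tmat)"
proof -
  have "sin_ratio p (p - 2) = lam p"
    using sin_ratio_Suc_Suc[OF assms, of "p - 2"] sin_ratio_self[of p]
      sin_ratio_reflect[OF assms, of 1] sin_ratio_1[OF assms] assms
    by (simp add: Suc_diff_Suc numeral_2_eq_2)
  then show ?thesis
    using sin_ratio_self[of p] sin_ratio_reflect[OF assms, of 1] sin_ratio_1[OF assms] assms
    by (simp add: hecke_block_def Tmat_def Smat_def Suc_diff_Suc numeral_2_eq_2 diff_diff_add)
qed

inductive_set block_products :: "nat \<Rightarrow> mat2 set" for p :: nat where
  "mid \<in> block_products p"
| "X \<in> block_products p \<Longrightarrow> 1 \<le> k \<Longrightarrow> k < p \<Longrightarrow> mmul X (hecke_block p k) \<in> block_products p"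

lemma block_products_gapped: "X \<in> block_products p \<Longrightarrow> p \<ge> 3 \<Longrightarrow> gapped_mat X"
  by (induction rule: block_products.induct)
    (simp_all add: mid_def gapped_def gapped_mat_mmul hecke_block_gapped)

definition tpow :: "bool \<Rightarrow> mat2" where
  "tpow r = (if r then Tmat else mid)"

definition msign :: "bool \<Rightarrow> mat2 \<Rightarrow> mat2" where
  "msign e M = (if e then mneg M else M)"

definition normal_forms :: "nat \<Rightarrow> mat2 set" where
  "normal_forms p = {msign e (mmul (mmul (tpow l) X) (tpow r)) | e l X r. X \<in> block_products p}"

lemma normal_formsI:
  "X \<in> block_products p \<Longrightarrow> msign e (mmul (mmul (tpow l) X) (tpow r)) \<in> normal_forms p"
  unfolding normal_forms_def by blast

lemma normal_formsE:
  assumes "M \<in> normal_forms p"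
  obtains e l X r where "X \<in> block_products p" "M = msign e (mmul (mmul (tpow l) X) (tpow r))"
  using assms unfolding normal_forms_def by blast

lemmas normal_form_simps =
  tpow_def msign_def mmul_assoc mmul_mneg_left mmul_mneg_right mmul_Tmat_Tmat

lemma normal_forms_mneg: "M \<in> normal_forms p \<Longrightarrow> mneg M \<in> normal_forms p"
  by (erule normal_formsE) (metis normal_formsI msign_def mneg_mneg)

lemma normal_forms_mmul_Tmat: "M \<in> normal_forms p \<Longrightarrow> mmul M Tmat \<in> normal_forms p"
proof (erule normal_formsE)
  fix e l X r
  assume X: "X \<in> block_products p" and M: "M = msign e (mmul (mmul (tpow l) X) (tpow r))"
  have "mmul M Tmat = msign (e \<noteq> r) (mmul (mmul (tpow l) X) (tpow (\<not> r)))"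
    unfolding M by (cases r; cases e) (simp_all add: normal_form_simps)
  then show ?thesis using normal_formsI[OF X] by simp
qed

lemma normal_forms_mmul_Tmat_Smat:
  assumes X: "X \<in> block_products p" and p: "p \<ge> 3"
  shows "msign e (mmul (mmul (mmul (tpow l) X) Tmat) (Smat p)) \<in> normal_forms p"
  using X
proof cases
  case 1
  have "msign e (mmul (mmul (mmul (tpow l) X) Tmat) (Smat p))
      = msign (e \<noteq> l) (mmul (mmul (tpow (\<not> l)) (mmul mid (hecke_block p 1))) (tpow False))"
    unfolding 1 hecke_block_1[OF p] by (cases l; cases e) (simp_all add: normal_form_simps)
  moreover have "mmul mid (hecke_block p 1) \<in> block_products p"
    using p by (intro block_products.intros) auto
  ultimately show ?thesis using normal_formsI by metis
next
  case (2 X' k)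
  have step: "mmul (hecke_block p k) (mmul Tmat (Smat p)) = hecke_block p (Suc k)"
    using hecke_block_Suc[OF p \<open>1 \<le> k\<close>] by (simp add: mmul_assoc)
  show ?thesis
  proof (cases "Suc k < p")
    case True
    have "msign e (mmul (mmul (mmul (tpow l) X) Tmat) (Smat p))
        = msign e (mmul (mmul (tpow l) (mmul X' (hecke_block p (Suc k)))) (tpow False))"
      unfolding 2 using step by (simp add: normal_form_simps)
    then show ?thesis using normal_formsI block_products.intros(2)[OF 2(2) _ True] by simp
  next
    case False
    then have "Suc k = p" using \<open>k < p\<close> by simp
    then have "msign e (mmul (mmul (mmul (tpow l) X) Tmat) (Smat p))
        = msign e (mmul (mmul (tpow l) X') (tpow True))"
      unfolding 2 using step hecke_block_self[OF p] by (simp add: normal_form_simps)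
    then show ?thesis using normal_formsI[OF 2(2)] by simp
  qed
qed

lemma normal_forms_mmul_Smat:
  assumes "M \<in> normal_forms p" and p: "p \<ge> 3"
  shows "mmul M (Smat p) \<in> normal_forms p"
  using assms(1)
proof (rule normal_formsE)
  fix e l X r
  assume X: "X \<in> block_products p" and M: "M = msign e (mmul (mmul (tpow l) X) (tpow r))"
  show ?thesis
  proof (cases r)
    case False
    then have "mmul M (Smat p) = msign e (mmul (mmul (tpow l) (mmul X (hecke_block p 1))) (tpow r))"
      unfolding M hecke_block_1[OF p] by (simp add: normal_form_simps)
    moreover have "mmul X (hecke_block p 1) \<in> block_products p"
      using X p by (simp add: block_products.intros)
    ultimately show ?thesis using normal_formsI by simp
  next
    case True
    then show ?thesis
      using normal_forms_mmul_Tmat_Smat[OF X p, of e l] unfolding M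
      by (cases e; cases l) (simp_all add: normal_form_simps)
  qed
qed

lemma normal_forms_mmul_hecke_block:
  assumes "M \<in> normal_forms p" and "p \<ge> 3" and "1 \<le> k"
  shows "mmul M (hecke_block p k) \<in> normal_forms p"
  using assms(3)
proof (induction k rule: nat_induct_at_least)
  case base
  show ?case using hecke_block_1[OF assms(2)] normal_forms_mmul_Smat[OF assms(1,2)] by simp
next
  case (Suc k)
  then show ?case
    using hecke_block_Suc[OF assms(2) Suc.hyps] assms(2)
    by (metis normal_forms_mmul_Smat normal_forms_mmul_Tmat mmul_assoc)
qed

lemma hecke_mats_normal_forms:
  assumes "M \<in> hecke_mats p" and p: "p \<ge> 3"
  shows "M \<in> normal_forms p"
  using assms(1)
proof induction
  case hm_id
  show ?case using normal_formsI[OF block_products.intros(1), of False False False]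
    by (simp add: normal_form_simps)
next
  case (hm_S M)
  then show ?case using normal_forms_mmul_Smat p by blast
next
  case (hm_T M)
  then show ?case using normal_forms_mmul_Tmat by blast
next
  case (hm_Si M)
  then have "mmul (mmul M Tmat) (hecke_block p (p - 1)) \<in> normal_forms p"
    using p by (intro normal_forms_mmul_hecke_block normal_forms_mmul_Tmat) auto
  then show ?case
    using normal_forms_mneg[OF normal_forms_mmul_Tmat] minv_Smat_eq[OF p]
    by (metis mmul_assoc mmul_mneg_right)
next
  case (hm_Ti M)
  then show ?case
    by (simp add: minv_Tmat mmul_mneg_right normal_forms_mneg normal_forms_mmul_Tmat)
qed

lemma hecke_mats_lower_left:
  assumes "M2 a b c d \<in> hecke_mats p" and "p \<ge> 3"
  shows "c = 0 \<or> 1 \<le> \<bar>c\<bar>"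
proof -
  obtain e l X r where X: "X \<in> block_products p"
    and M: "M2 a b c d = msign e (mmul (mmul (tpow l) X) (tpow r))"
    using hecke_mats_normal_forms[OF assms] by (rule normal_formsE)
  obtain x1 x2 x3 x4 where X_eq: "X = M2 x1 x2 x3 x4" by (cases X)
  have "c \<in> {x1, x2, x3, x4, -x1, -x2, -x3, -x4}"
    using M X_eq by (cases l; cases r; cases e) (auto simp: tpow_def msign_def Tmat_def)
  moreover have "gapped x1" "gapped x2" "gapped x3" "gapped x4"
    using block_products_gapped[OF X assms(2)] X_eq by simp_all
  ultimately show ?thesis by (auto simp: gapped_def)
qed

lemma hecke_mats_upper_triangular:
  assumes M: "M2 a b 0 d \<in> hecke_mats p" and p: "p \<ge> 3"
  shows "d = a \<and> (a = 1 \<or> a = -1)"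
proof -
  have det: "a * d = 1" using hecke_mats_mdet[OF M] by simp
  have "mmul (mmul (M2 a b 0 d) Tmat) (minv (M2 a b 0 d)) = M2 (b*d) (-(a*a) - b*b) (d*d) (-(d*b))"
    "mmul (mmul (minv (M2 a b 0 d)) Tmat) (M2 a b 0 d) = M2 (-(b*a)) (-(b*b) - d*d) (a*a) (a*b)"
    by (simp_all add: Tmat_def algebra_simps)
  then have "M2 (b*d) (-(a*a) - b*b) (d*d) (-(d*b)) \<in> hecke_mats p"
    "M2 (-(b*a)) (-(b*b) - d*d) (a*a) (a*b) \<in> hecke_mats p"
    using M hecke_mats_generators(2) by (metis hecke_mats_mmul hecke_mats_minv)+
  then have "d * d = 0 \<or> 1 \<le> \<bar>d * d\<bar>" "a * a = 0 \<or> 1 \<le> \<bar>a * a\<bar>"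
    using hecke_mats_lower_left[OF _ p] by blast+
  then have "1 \<le> d * d" "1 \<le> a * a"
    using det by auto
  moreover have "(a * a) * (d * d) = 1" using det by (simp add: algebra_simps)
  ultimately have "a * a = 1"
    using mult_left_mono[of 1 "d * d" "a * a"] by simp
  moreover have "a * (d - a) = 0" using det \<open>a * a = 1\<close> by (simp add: algebra_simps)
  ultimately show ?thesis using det by (auto simp: square_eq_1_iff)
qed

lemma hecke_mats_hyperbolic_lower_left:
  assumes "M2 a b c d \<in> hecke_mats p" and "p \<ge> 3" and "hyperbolic (M2 a b c d)"
  shows "c \<noteq> 0"
  using assms hecke_mats_upper_triangular[of a b d p] by (auto simp: hyperbolic_def)

section \<open>Fixed points and multipliers\<close>

abbreviation fixed_by :: "mat2 \<Rightarrow> real \<Rightarrow> bool" where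
  "fixed_by M x \<equiv> moeb M (Some x) = Some x"

text \<open>At a fixed point \<open>x\<close> of \<open>M\<close>, \<open>multiplier M x\<close> is the eigenvalue of \<open>M\<close> on the
  eigenvector \<open>(x, 1)\<close>; hence it is multiplicative on the stabilizer of \<open>x\<close>.\<close>
fun multiplier :: "mat2 \<Rightarrow> real \<Rightarrow> real" where
  "multiplier (M2 a b c d) x = c * x + d"

lemma fixed_by_iff: "fixed_by (M2 a b c d) x \<longleftrightarrow> c * x + d \<noteq> 0 \<and> a * x + b = x * (c * x + d)"
  by (auto simp: field_simps)

lemma multiplier_nonzero: "fixed_by M x \<Longrightarrow> multiplier M x \<noteq> 0"
  by (cases M) (auto simp: fixed_by_iff simp del: moeb.simps)

lemma fixed_by_mid: "fixed_by mid x" and multiplier_mid: "multiplier mid x = 1"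
  by (simp_all add: mid_def)

lemma fixed_by_mneg: "fixed_by A x \<Longrightarrow> fixed_by (mneg A) x"
  and multiplier_mneg: "multiplier (mneg A) x = - multiplier A x"
  by (cases A; simp only: fixed_by_iff mneg.simps multiplier.simps; simp add: algebra_simps)+

lemma fixed_by_mmul:
  assumes "fixed_by A x" and "fixed_by B x"
  shows "fixed_by (mmul A B) x" and "multiplier (mmul A B) x = multiplier A x * multiplier B x"
proof -
  obtain a b c d e f g h where A: "A = M2 a b c d" and B: "B = M2 e f g h"
    by (cases A; cases B)
  have fA: "c*x + d \<noteq> 0" "a*x + b = x*(c*x + d)" and fB: "g*x + h \<noteq> 0" "e*x + f = x*(g*x + h)"
    using assms unfolding A B fixed_by_iff by auto
  have den: "(c*e + d*g)*x + (c*f + d*h) = (c*x + d)*(g*x + h)"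
  proof -
    have "(c*e + d*g)*x + (c*f + d*h) = c*(e*x + f) + d*(g*x + h)" by (simp add: algebra_simps)
    also have "\<dots> = (c*x + d)*(g*x + h)" using fB(2) by (simp add: algebra_simps)
    finally show ?thesis .
  qed
  have num: "(a*e + b*g)*x + (a*f + b*h) = x*((c*x + d)*(g*x + h))"
  proof -
    have "(a*e + b*g)*x + (a*f + b*h) = a*(e*x + f) + b*(g*x + h)" by (simp add: algebra_simps)
    also have "\<dots> = (a*x + b)*(g*x + h)" using fB(2) by (simp add: algebra_simps)
    also have "\<dots> = x*((c*x + d)*(g*x + h))" using fA(2) by simp
    finally show ?thesis .
  qed
  show "fixed_by (mmul A B) x" "multiplier (mmul A B) x = multiplier A x * multiplier B x"
    using fA(1) fB(1) unfolding A B mmul.simps fixed_by_iff multiplier.simps den num by simp_all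
qed

lemma multiplier_minv_mult:
  assumes "mdet A = 1" and "fixed_by A x"
  shows "multiplier (minv A) x * multiplier A x = 1"
proof -
  obtain a b c d where A: "A = M2 a b c d" by (cases A)
  have fixed: "a*x + b = x*(c*x + d)" and det: "a*d - b*c = 1"
    using assms unfolding A fixed_by_iff by auto
  have "(a - c*x) * (c*x + d) = a*d - c*(c*x*x + d*x - a*x)"
    by (simp add: algebra_simps)
  also have "c*x*x + d*x - a*x = b"
    using fixed by (simp add: algebra_simps)
  finally show ?thesis unfolding A using det by (simp add: algebra_simps)
qed

lemma fixed_by_minv:
  assumes "mdet A = 1" and "fixed_by A x"
  shows "fixed_by (minv A) x" and "multiplier (minv A) x = 1 / multiplier A x"
proof -
  obtain a b c d where A: "A = M2 a b c d" by (cases A)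
  have "a*x + b = x*(c*x + d)" using assms(2) unfolding A fixed_by_iff by auto
  then have "d*x - b = x*(a - c*x)" by (simp add: algebra_simps)
  moreover have "a - c*x \<noteq> 0"
    using multiplier_minv_mult[OF assms] unfolding A by auto
  ultimately show "fixed_by (minv A) x" unfolding A by simp
  show "multiplier (minv A) x = 1 / multiplier A x"
    using multiplier_minv_mult[OF assms] multiplier_nonzero[OF assms(2)] by (simp add: field_simps)
qed

lemma fixed_by_mpow: "fixed_by A x \<Longrightarrow> fixed_by (mpow A n) x"
  by (induction n) (simp_all add: fixed_by_mid fixed_by_mmul)

lemma fixed_by_mzpow: "mdet M = 1 \<Longrightarrow> fixed_by M x \<Longrightarrow> fixed_by (mzpow M k) x"
  by (simp add: mzpow_def fixed_by_mpow fixed_by_minv)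

lemma mtrace_eq_multiplier:
  assumes "mdet A = 1" and "fixed_by A x"
  shows "mtrace A = multiplier A x + 1 / multiplier A x"
proof -
  obtain a b c d where A: "A = M2 a b c d" by (cases A)
  have "mtrace A = multiplier (minv A) x + multiplier A x"
    unfolding A by simp
  then show ?thesis using fixed_by_minv(2)[OF assms] by simp
qed

lemma abs_add_inverse: "(v::real) \<noteq> 0 \<Longrightarrow> \<bar>v + 1 / v\<bar> = 2 + (\<bar>v\<bar> - 1)\<^sup>2 / \<bar>v\<bar>"
proof (cases "v > 0")
  case True
  then show ?thesis by (simp add: field_simps power2_eq_square)
next
  case False
  moreover assume "v \<noteq> 0"
  ultimately have "v < 0" by simp
  then have "1 / v < 0" by simp
  then have "v + 1 / v < 0" using \<open>v < 0\<close> by linarith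
  then show ?thesis using \<open>v < 0\<close> by (simp add: field_simps power2_eq_square)
qed

lemma abs_diff_inverse:
  fixes v :: real
  assumes "1 \<le> \<bar>v\<bar>"
  shows "\<bar>v - 1 / v\<bar> = \<bar>v\<bar> - 1 / \<bar>v\<bar>"
proof (cases "v > 0")
  case True
  then have "1 / v \<le> 1" "1 \<le> v" using assms by simp_all
  then have "0 \<le> v - 1 / v" by linarith
  then show ?thesis using True by simp
next
  case False
  then have "v \<le> -1" "-1 \<le> 1 / v" using assms by (auto simp: le_divide_eq)
  then show ?thesis using False by (simp add: abs_if)
qed

lemma diff_inverse_le: "1 \<le> (w::real) \<Longrightarrow> w - 1 / w \<le> 2 * (w - 1)"
  using zero_le_power2[of "w - 1"] by (simp add: field_simps power2_eq_square)

lemma hyperbolic_iff_multiplier: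
  assumes "mdet M = 1" and "fixed_by M x"
  shows "hyperbolic M \<longleftrightarrow> \<bar>multiplier M x\<bar> \<noteq> 1"
  using abs_add_inverse[OF multiplier_nonzero[OF assms(2)]] multiplier_nonzero[OF assms(2)]
  by (simp add: hyperbolic_def mtrace_eq_multiplier[OF assms] zero_less_divide_iff)

definition log_multiplier :: "mat2 \<Rightarrow> real \<Rightarrow> real" where
  "log_multiplier M x = ln \<bar>multiplier M x\<bar>"

lemma log_multiplier_mmul:
  "fixed_by A x \<Longrightarrow> fixed_by B x \<Longrightarrow>
     log_multiplier (mmul A B) x = log_multiplier A x + log_multiplier B x"
  by (simp add: log_multiplier_def fixed_by_mmul abs_mult ln_mult multiplier_nonzero)

lemma log_multiplier_minv:
  "mdet A = 1 \<Longrightarrow> fixed_by A x \<Longrightarrow> log_multiplier (minv A) x = - log_multiplier A x"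
  by (simp add: log_multiplier_def fixed_by_minv abs_divide ln_div multiplier_nonzero)

lemma log_multiplier_mpow: "fixed_by A x \<Longrightarrow> log_multiplier (mpow A n) x = n * log_multiplier A x"
  by (induction n)
    (simp_all add: log_multiplier_def multiplier_mid fixed_by_mpow algebra_simps
      log_multiplier_mmul[unfolded log_multiplier_def])

lemma log_multiplier_mzpow:
  "mdet M = 1 \<Longrightarrow> fixed_by M x \<Longrightarrow> log_multiplier (mzpow M k) x = k * log_multiplier M x"
  by (simp add: mzpow_def log_multiplier_mpow fixed_by_minv log_multiplier_minv)

lemma log_multiplier_mneg: "log_multiplier (mneg A) x = log_multiplier A x"
  by (simp add: log_multiplier_def multiplier_mneg)

lemma log_multiplier_pos_iff: "fixed_by M x \<Longrightarrow> 0 < log_multiplier M x \<longleftrightarrow> 1 < \<bar>multiplier M x\<bar>"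
  by (simp add: log_multiplier_def multiplier_nonzero)

lemma log_multiplier_eq_0_iff: "fixed_by M x \<Longrightarrow> log_multiplier M x = 0 \<longleftrightarrow> \<bar>multiplier M x\<bar> = 1"
  by (simp add: log_multiplier_def multiplier_nonzero)

lemma moeb_mmul:
  assumes "mdet B \<noteq> 0"
  shows "moeb (mmul A B) (Some x) = moeb A (moeb B (Some x))"
proof -
  obtain a b c d e f g h where A: "A = M2 a b c d" and B: "B = M2 e f g h"
    by (cases A; cases B)
  define u where "u = g*x + h"
  define w where "w = e*x + f"
  have num: "(a*e + b*g)*x + (a*f + b*h) = a*w + b*u"
    and den: "(c*e + d*g)*x + (c*f + d*h) = c*w + d*u"
    by (simp_all add: u_def w_def algebra_simps)
  show ?thesis
  proof (cases "u = 0")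
    case True
    have "mdet B = e*u - g*w" unfolding B u_def w_def by (simp add: algebra_simps)
    then have "w \<noteq> 0" using assms True by auto
    then show ?thesis
      using True unfolding A B mmul.simps moeb.simps num den u_def[symmetric] by simp
  next
    case False
    have "c * (w / u) + d = (c*w + d*u) / u" "a * (w / u) + b = (a*w + b*u) / u"
      using False by (simp_all add: field_simps)
    then show ?thesis
      using False unfolding A B mmul.simps moeb.simps num den u_def[symmetric] w_def[symmetric]
      by simp
  qed
qed

lemma moeb_minv_cancel:
  "mdet V = 1 \<Longrightarrow> moeb (minv V) (Some x) = Some y \<Longrightarrow> moeb V (Some y) = Some x"
  using moeb_mmul[where A = V and B = "minv V" and x = x] by (simp add: mmul_minv_right mid_def)

lemma fixed_by_mconj:
  assumes "mdet V = 1" and "mdet N = 1" and "fixed_by N w" and "moeb (minv V) (Some w) = Some z"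
  shows "fixed_by (mconj V N) z"
  using assms moeb_minv_cancel[OF assms(1,4)] by (simp add: mconj_def moeb_mmul mdet_mmul)

section \<open>The stabilizer of a hyperbolic fixed point\<close>

lemma Inf_mem_if_diff_closed:
  fixes A :: "real set"
  assumes "A \<noteq> {}" and "\<epsilon> > 0"
    and lower: "\<And>t. t \<in> A \<Longrightarrow> \<epsilon> \<le> t"
    and diff: "\<And>s t. s \<in> A \<Longrightarrow> t \<in> A \<Longrightarrow> s < t \<Longrightarrow> t - s \<in> A"
  shows "Inf A \<in> A"
proof (rule ccontr)
  assume not_mem: "Inf A \<notin> A"
  have bdd: "bdd_below A" by (rule bdd_belowI[OF lower])
  obtain t where t: "t \<in> A" "t < Inf A + \<epsilon>"
    using cInf_less_iff[OF assms(1) bdd, of "Inf A + \<epsilon>"] \<open>\<epsilon> > 0\<close> by auto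
  then have "Inf A < t" using cInf_lower[OF t(1) bdd] not_mem by (cases "Inf A = t") auto
  then obtain s where s: "s \<in> A" "s < t"
    using cInf_less_iff[OF assms(1) bdd] by auto
  have "Inf A \<le> s" using cInf_lower[OF s(1) bdd] .
  then have "t - s < \<epsilon>" using t(2) by simp
  then show False using lower[OF diff[OF s(1) t(1) s(2)]] by simp
qed

definition parabolic_at :: "real \<Rightarrow> real \<Rightarrow> mat2" where
  "parabolic_at x t = M2 (1 + t*x) (-(t*x*x)) t (1 - t*x)"

lemma parabolic_at_0: "parabolic_at x 0 = mid"
  by (simp add: parabolic_at_def mid_def)

lemma multiplier_1_parabolic_at:
  assumes "mdet Y = 1" and "fixed_by Y x" and "multiplier Y x = 1"
  obtains t where "Y = parabolic_at x t"
proof -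
  obtain a b c d where Y: "Y = M2 a b c d" by (cases Y)
  have "a + d = 2" using mtrace_eq_multiplier[OF assms(1,2)] assms(3) Y by simp
  moreover have "c*x + d = 1" and fixed: "a*x + b = x*(c*x + d)"
    using assms(2,3) Y fixed_by_iff by auto
  ultimately have "d = 1 - c*x" "a = 1 + c*x" by linarith+
  moreover from this have "b = -(c*x*x)" using fixed by (simp add: algebra_simps)
  ultimately have "Y = parabolic_at x c"
    unfolding Y parabolic_at_def by simp
  then show ?thesis ..
qed

lemma mconj_parabolic_at:
  assumes "mdet M = 1" and "fixed_by M x"
  shows "mconj M (parabolic_at x t) = parabolic_at x (t / multiplier M x ^ 2)"
proof -
  obtain a b c d where M: "M = M2 a b c d" by (cases M)
  define m where "m = c*x + d"
  have m: "m \<noteq> 0" using multiplier_nonzero[OF assms(2)] unfolding M m_def by simp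
  have "a - c*x = 1/m" using fixed_by_minv(2)[OF assms] unfolding M m_def by simp
  moreover have "b = x*m - a*x" using assms(2) unfolding M m_def fixed_by_iff by simp
  ultimately have "M = M2 (1/m + c*x) (x*m - (1/m + c*x)*x) c (m - c*x)"
    unfolding M m_def by simp
  then show ?thesis
    using m unfolding parabolic_at_def mconj_def by (simp add: field_simps power2_eq_square)
qed

lemma stabilizer_mmul_minv:
  assumes "N1 \<in> hecke_mats p" "fixed_by N1 x" "N2 \<in> hecke_mats p" "fixed_by N2 x"
  shows "mmul N1 (minv N2) \<in> hecke_mats p" and "fixed_by (mmul N1 (minv N2)) x"
    and "log_multiplier (mmul N1 (minv N2)) x = log_multiplier N1 x - log_multiplier N2 x"
  using assms fixed_by_minv(1)[OF hecke_mats_mdet[OF assms(3)] assms(4)]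
  by (simp_all add: hecke_mats_mmul hecke_mats_minv fixed_by_mmul log_multiplier_mmul
      log_multiplier_minv hecke_mats_mdet)

locale hyperbolic_stabilizer =
  fixes p :: nat and x :: real and M0 :: mat2
  assumes p: "p \<ge> 3" and M0_hecke: "M0 \<in> hecke_mats p" and M0_fixed: "fixed_by M0 x"
    and M0_multiplier: "\<bar>multiplier M0 x\<bar> > 1"
begin

lemma M0_mdet: "mdet M0 = 1"
  using hecke_mats_mdet[OF M0_hecke] .

text \<open>Conjugating by powers of \<open>M0\<close> shrinks the lower-left entry of a parabolic element
  towards 0, which discreteness forbids unless it already vanishes.\<close>
lemma multiplier_1_eq_mid:
  assumes N: "N \<in> hecke_mats p" "fixed_by N x" and "multiplier N x = 1"
  shows "N = mid"
proof -
  obtain t where t: "N = parabolic_at x t"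
    using multiplier_1_parabolic_at[OF hecke_mats_mdet[OF N(1)] N(2) assms(3)] .
  define \<mu> where "\<mu> = multiplier M0 x ^ 2"
  have "\<bar>multiplier M0 x\<bar> ^ 2 > 1" using M0_multiplier by (intro one_less_power) auto
  then have "\<mu> > 1" unfolding \<mu>_def by simp
  have shrink: "parabolic_at x (t / \<mu> ^ n) \<in> hecke_mats p" for n
  proof (induction n)
    case 0
    then show ?case using N(1) t by simp
  next
    case (Suc n)
    then show ?case
      using hecke_mats_mconj[OF M0_hecke Suc] mconj_parabolic_at[OF M0_mdet M0_fixed]
      by (simp add: \<mu>_def mult.commute)
  qed
  obtain n where n: "\<bar>t\<bar> < \<mu> ^ n" using real_arch_pow[OF \<open>\<mu> > 1\<close>] by blast
  have "\<bar>t / \<mu> ^ n\<bar> < 1" using n \<open>\<mu> > 1\<close> by (simp add: abs_divide)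
  moreover have "t / \<mu> ^ n = 0 \<or> 1 \<le> \<bar>t / \<mu> ^ n\<bar>"
    using hecke_mats_lower_left[OF shrink[of n, unfolded parabolic_at_def] p] .
  ultimately have "t / \<mu> ^ n = 0" by linarith
  then show ?thesis using t \<open>\<mu> > 1\<close> by (simp add: parabolic_at_0)
qed

lemma abs_multiplier_1:
  assumes N: "N \<in> hecke_mats p" "fixed_by N x" and "\<bar>multiplier N x\<bar> = 1"
  shows "N = mid \<or> N = mneg mid"
proof (cases "multiplier N x = 1")
  case True
  then show ?thesis using multiplier_1_eq_mid[OF N] by simp
next
  case False
  then have "multiplier (mneg N) x = 1" using assms(3) by (auto simp: multiplier_mneg)
  then have "mneg N = mid"
    using multiplier_1_eq_mid hecke_mats_mneg[OF N(1)] fixed_by_mneg[OF N(2)] by blast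
  then show ?thesis by (metis mneg_mneg)
qed

lemma stabilizer_commute:
  assumes N: "N \<in> hecke_mats p" "fixed_by N x"
  shows "mmul N M0 = mmul M0 N"
proof -
  define Y where "Y = mmul (mmul (mmul N M0) (minv N)) (minv M0)"
  note N_inv = fixed_by_minv[OF hecke_mats_mdet[OF N(1)] N(2)]
  note M0_inv = fixed_by_minv[OF M0_mdet M0_fixed]
  have "Y \<in> hecke_mats p"
    unfolding Y_def by (intro hecke_mats_mmul hecke_mats_minv N(1) M0_hecke)
  moreover have "fixed_by Y x" and "multiplier Y x = 1"
    unfolding Y_def using N(2) M0_fixed N_inv M0_inv
      multiplier_nonzero[OF N(2)] multiplier_nonzero[OF M0_fixed]
    by (simp_all add: fixed_by_mmul)
  ultimately have "Y = mid" using multiplier_1_eq_mid by blast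
  then have "mmul Y (mmul M0 N) = mmul M0 N" by simp
  moreover have "mmul Y (mmul M0 N) = mmul N M0"
    unfolding Y_def
    by (simp add: mmul_assoc mmul_minv_left_cancel mmul_minv_left M0_mdet hecke_mats_mdet[OF N(1)])
  ultimately show ?thesis by simp
qed

lemma M0_lower_left:
  obtains a0 b0 c0 d0 where "M0 = M2 a0 b0 c0 d0" and "c0 \<noteq> 0"
proof -
  obtain a0 b0 c0 d0 where M0: "M0 = M2 a0 b0 c0 d0" by (cases M0)
  have "hyperbolic M0"
    using hyperbolic_iff_multiplier[OF M0_mdet M0_fixed] M0_multiplier by simp
  then show ?thesis using that M0 hecke_mats_hyperbolic_lower_left M0_hecke p by blast
qed

text \<open>Commuting with \<open>M0\<close> ties the lower-left entry of \<open>N\<close> to its multiplier; this is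
  what makes the multipliers of the stabilizer discrete.\<close>
lemma stabilizer_lower_left:
  assumes N: "M2 a b c d \<in> hecke_mats p" "fixed_by (M2 a b c d) x" and M0: "M0 = M2 a0 b0 c0 d0"
  defines "\<mu> \<equiv> multiplier M0 x" and "v \<equiv> multiplier (M2 a b c d) x"
  shows "c * (\<mu> - 1 / \<mu>) = c0 * (v - 1 / v)"
proof -
  have commute: "c * a0 + d * c0 = c0 * a + d0 * c"
    using stabilizer_commute[OF N] unfolding M0 by simp
  have inv: "1 / \<mu> = a0 - c0 * x" "1 / v = a - c * x"
    using fixed_by_minv(2)[OF M0_mdet M0_fixed] fixed_by_minv(2)[OF hecke_mats_mdet[OF N(1)] N(2)]
    unfolding \<mu>_def v_def M0 by simp_all
  have "\<mu> = c0 * x + d0" "v = c * x + d"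
    unfolding \<mu>_def v_def M0 by simp_all
  then show ?thesis unfolding inv using commute by (simp add: algebra_simps)
qed

lemma multiplier_gap:
  obtains \<delta> :: real where "\<delta> > 0"
    and "\<And>N. N \<in> hecke_mats p \<Longrightarrow> fixed_by N x \<Longrightarrow> 1 < \<bar>multiplier N x\<bar> \<Longrightarrow>
           1 + \<delta> \<le> \<bar>multiplier N x\<bar>"
proof -
  obtain a0 b0 c0 d0 where M0: "M0 = M2 a0 b0 c0 d0" and "c0 \<noteq> 0" by (rule M0_lower_left)
  define \<mu> where "\<mu> = multiplier M0 x"
  have "1 / \<bar>\<mu>\<bar> < 1" "1 < \<bar>\<mu>\<bar>" using M0_multiplier unfolding \<mu>_def by simp_all
  then have D: "\<bar>\<mu> - 1 / \<mu>\<bar> > 0" using abs_diff_inverse[of \<mu>] by linarith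
  have "1 + \<bar>\<mu> - 1 / \<mu>\<bar> / (2 * \<bar>c0\<bar>) \<le> \<bar>multiplier N x\<bar>"
    if N: "N \<in> hecke_mats p" "fixed_by N x" and gt: "1 < \<bar>multiplier N x\<bar>" for N
  proof -
    obtain a b c d where N_eq: "N = M2 a b c d" by (cases N)
    define v where "v = multiplier N x"
    have rel: "c * (\<mu> - 1 / \<mu>) = c0 * (v - 1 / v)"
      using stabilizer_lower_left[OF N[unfolded N_eq] M0] unfolding \<mu>_def v_def N_eq .
    have "1 / \<bar>v\<bar> < 1" "1 < \<bar>v\<bar>" using gt unfolding v_def by simp_all
    then have "\<bar>v - 1 / v\<bar> > 0" using abs_diff_inverse[of v] by linarith
    then have "v - 1 / v \<noteq> 0" by simp
    then have "c \<noteq> 0" using rel \<open>c0 \<noteq> 0\<close> by auto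
    then have "1 \<le> \<bar>c\<bar>" using hecke_mats_lower_left[OF N(1)[unfolded N_eq] p] by simp
    then have "\<bar>\<mu> - 1 / \<mu>\<bar> \<le> \<bar>c\<bar> * \<bar>\<mu> - 1 / \<mu>\<bar>"
      using D by (simp add: mult_le_cancel_right1)
    also have "\<dots> = \<bar>c0\<bar> * \<bar>v - 1 / v\<bar>" using rel by (simp flip: abs_mult)
    also have "\<dots> \<le> \<bar>c0\<bar> * (2 * (\<bar>v\<bar> - 1))"
      using abs_diff_inverse[of v] diff_inverse_le[of "\<bar>v\<bar>"] gt unfolding v_def
      by (simp add: mult_left_mono)
    finally show ?thesis using \<open>c0 \<noteq> 0\<close> unfolding v_def by (simp add: field_simps)
  qed
  then show ?thesis using that[of "\<bar>\<mu> - 1 / \<mu>\<bar> / (2 * \<bar>c0\<bar>)"] D \<open>c0 \<noteq> 0\<close> by simp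
qed

lemma minimal_log_multiplier:
  obtains M where "M \<in> hecke_mats p" "fixed_by M x" "0 < log_multiplier M x"
    and "\<And>N. N \<in> hecke_mats p \<Longrightarrow> fixed_by N x \<Longrightarrow> 0 < log_multiplier N x \<Longrightarrow>
           log_multiplier M x \<le> log_multiplier N x"
proof -
  obtain \<delta> :: real where "\<delta> > 0"
    and gap: "\<And>N. N \<in> hecke_mats p \<Longrightarrow> fixed_by N x \<Longrightarrow> 1 < \<bar>multiplier N x\<bar> \<Longrightarrow>
                1 + \<delta> \<le> \<bar>multiplier N x\<bar>"
    using multiplier_gap by blast
  define A where
    "A = {log_multiplier N x | N. N \<in> hecke_mats p \<and> fixed_by N x \<and> 0 < log_multiplier N x}"
  have "Inf A \<in> A"
  proof (rule Inf_mem_if_diff_closed)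
    show "A \<noteq> {}"
      using M0_hecke M0_fixed M0_multiplier log_multiplier_pos_iff unfolding A_def by blast
    show "ln (1 + \<delta>) > 0" using \<open>\<delta> > 0\<close> by simp
  next
    fix t assume "t \<in> A"
    then obtain N where "N \<in> hecke_mats p" "fixed_by N x" "1 < \<bar>multiplier N x\<bar>"
      and "t = log_multiplier N x"
      unfolding A_def using log_multiplier_pos_iff by blast
    then show "ln (1 + \<delta>) \<le> t"
      using gap \<open>\<delta> > 0\<close> by (simp add: log_multiplier_def)
  next
    fix s t assume "s \<in> A" "t \<in> A" "s < t"
    then obtain N1 N2 where N: "N1 \<in> hecke_mats p" "fixed_by N1 x" "N2 \<in> hecke_mats p"
      "fixed_by N2 x" and "t = log_multiplier N1 x" "s = log_multiplier N2 x"
      unfolding A_def by blast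
    then have "mmul N1 (minv N2) \<in> hecke_mats p" "fixed_by (mmul N1 (minv N2)) x"
      "log_multiplier (mmul N1 (minv N2)) x = t - s"
      using stabilizer_mmul_minv[OF N] by simp_all
    then show "t - s \<in> A" using \<open>s < t\<close> unfolding A_def by force
  qed
  then obtain M where "M \<in> hecke_mats p" "fixed_by M x" "0 < log_multiplier M x"
    and "Inf A = log_multiplier M x"
    unfolding A_def by blast
  moreover have "bdd_below A"
    unfolding A_def by (rule bdd_belowI[of _ 0]) auto
  then have "Inf A \<le> t" if "t \<in> A" for t
    using that by (rule cInf_lower[rotated])
  ultimately show ?thesis using that unfolding A_def by auto
qed

text \<open>Dividing \<open>N\<close> by the power of \<open>M\<close> nearest below it leaves a stabilizer element of
  log-multiplier in \<open>[0, log_multiplier M x)\<close>, which by minimality is \<open>\<plusminus>I\<close>.\<close>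
lemma minimal_log_multiplier_generates:
  assumes M: "M \<in> hecke_mats p" "fixed_by M x" and pos: "0 < log_multiplier M x"
    and minimal: "\<And>N. N \<in> hecke_mats p \<Longrightarrow> fixed_by N x \<Longrightarrow> 0 < log_multiplier N x \<Longrightarrow>
                   log_multiplier M x \<le> log_multiplier N x"
    and N: "N \<in> hecke_mats p" "fixed_by N x"
  shows "\<exists>n. N = mzpow M n \<or> N = mneg (mzpow M n)"
proof -
  define n where "n = \<lfloor>log_multiplier N x / log_multiplier M x\<rfloor>"
  define R where "R = mmul N (minv (mzpow M n))"
  note det = hecke_mats_mdet[OF M(1)]
  have R: "R \<in> hecke_mats p" "fixed_by R x"
    and "log_multiplier R x = log_multiplier N x - n * log_multiplier M x"
    using stabilizer_mmul_minv[OF N hecke_mats_mzpow[OF M(1)] fixed_by_mzpow[OF det M(2)]]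
    unfolding R_def by (simp_all add: log_multiplier_mzpow[OF det M(2)])
  moreover have "n \<le> log_multiplier N x / log_multiplier M x"
    "log_multiplier N x / log_multiplier M x < n + 1"
    unfolding n_def by linarith+
  then have "n * log_multiplier M x \<le> log_multiplier N x"
    "log_multiplier N x < (n + 1) * log_multiplier M x"
    using pos by (simp_all add: le_divide_eq divide_less_eq)
  ultimately have "log_multiplier R x = 0"
    using minimal[OF R] by (fastforce simp: algebra_simps)
  then have "R = mid \<or> R = mneg mid"
    using abs_multiplier_1[OF R] log_multiplier_eq_0_iff[OF R(2)] by simp
  moreover have "N = mmul R (mzpow M n)"
    unfolding R_def by (simp add: mmul_assoc mmul_minv_left mdet_mzpow[OF det])
  ultimately show ?thesis by (auto simp: mmul_mneg_left)
qed

lemma stab_generator_exists: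
  obtains M where "stab_generator p x M" and "0 < log_multiplier M x"
proof -
  obtain M where M: "M \<in> hecke_mats p" "fixed_by M x" and pos: "0 < log_multiplier M x"
    and minimal: "\<And>N. N \<in> hecke_mats p \<Longrightarrow> fixed_by N x \<Longrightarrow> 0 < log_multiplier N x \<Longrightarrow>
                   log_multiplier M x \<le> log_multiplier N x"
    using minimal_log_multiplier by blast
  then have "stab_generator p x M"
    using minimal_log_multiplier_generates[OF M pos minimal] unfolding stab_generator_def by blast
  then show ?thesis using that pos by blast
qed

end

section \<open>Quadratic forms of matrices\<close>

fun bqf_disc :: "bqf \<Rightarrow> real" where
  "bqf_disc (A, B, C) = B\<^sup>2 - 4 * A * C"

fun bqf_root :: "bqf \<Rightarrow> real" where
  "bqf_root (A, B, C) = (- B + sqrt (B\<^sup>2 - 4 * A * C)) / (2 * A)"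

fun bqf_neg :: "bqf \<Rightarrow> bqf" where
  "bqf_neg (A, B, C) = (- A, - B, - C)"

lemma bqf_neg_neg [simp]: "bqf_neg (bqf_neg Q) = Q"
  by (cases Q) simp

fun bqf_of_mat :: "mat2 \<Rightarrow> bqf" where
  "bqf_of_mat (M2 a b c d) = (c, d - a, - b)"

lemma bqf_disc_comp: "bqf_disc (bqf_comp Q V) = bqf_disc Q * mdet V ^ 2"
  by (cases Q; cases V) (simp add: power2_eq_square algebra_simps)

lemma bqf_root_iff:
  "A \<noteq> 0 \<Longrightarrow> t = bqf_root (A, B, C) \<longleftrightarrow> 2 * A * t + B = sqrt (bqf_disc (A, B, C))"
  by (auto simp: field_simps)

lemma bqf_root_is_root:
  assumes "fst Q \<noteq> 0" and "bqf_disc Q \<ge> 0"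
  shows "bqf_eval Q (bqf_root Q) 1 = 0"
proof -
  obtain A B C where Q: "Q = (A, B, C)" by (cases Q)
  define r where "r = bqf_root Q"
  have "(2 * A * r + B)\<^sup>2 = B\<^sup>2 - 4 * A * C"
    using bqf_root_iff[of A r B C] assms unfolding Q r_def by simp
  then have "4 * A * (A * r\<^sup>2 + B * r + C) = 0"
    by (simp add: power2_eq_square algebra_simps)
  then show ?thesis using assms(1) unfolding Q r_def bqf_eval_def by simp
qed

lemma bqf_roots:
  assumes "fst Q \<noteq> 0" and "bqf_eval Q t 1 = 0"
  shows "t = bqf_root Q \<or> t = bqf_root (bqf_neg Q)"
proof -
  obtain A B C where Q: "Q = (A, B, C)" by (cases Q)
  have "(2 * A * t + B)\<^sup>2 - (B\<^sup>2 - 4 * A * C) = 4 * A * (A * t\<^sup>2 + B * t + C)"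
    by (simp add: power2_eq_square algebra_simps)
  then have "(2 * A * t + B)\<^sup>2 = B\<^sup>2 - 4 * A * C"
    using assms(2) unfolding Q bqf_eval_def by simp
  then have "2 * A * t + B = sqrt (B\<^sup>2 - 4 * A * C) \<or> 2 * A * t + B = - sqrt (B\<^sup>2 - 4 * A * C)"
    by (metis real_sqrt_abs abs_if minus_minus)
  then show ?thesis using assms(1) unfolding Q by (auto simp: field_simps)
qed

lemma bqf_root_neg_neq:
  "fst Q \<noteq> 0 \<Longrightarrow> bqf_disc Q > 0 \<Longrightarrow> bqf_root (bqf_neg Q) \<noteq> bqf_root Q"
  by (cases Q) (simp add: field_simps)

text \<open>Since \<open>Q(r, 1) = 0\<close>, Euler's identity shows that \<open>\<partial>\<^sub>x(Q \<circ> V)\<close> at \<open>V\<^sup>-\<^sup>1(r, 1)\<close>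
  equals \<open>\<partial>\<^sub>xQ(r, 1) = 2 A r + B\<close>; and \<open>2 A t + B = \<surd>D\<close> singles out \<open>bqf_root\<close>
  among the two roots.\<close>
lemma bqf_root_comp:
  assumes A: "fst Q \<noteq> 0" and D: "bqf_disc Q > 0" and det: "mdet V = 1"
    and A': "fst (bqf_comp Q V) \<noteq> 0"
  shows "moeb (minv V) (Some (bqf_root Q)) = Some (bqf_root (bqf_comp Q V))"
proof -
  obtain A B C v1 v2 v3 v4 where Q: "Q = (A, B, C)" and V: "V = M2 v1 v2 v3 v4"
    by (cases Q; cases V) auto
  obtain A' B' C' where Q': "bqf_comp Q V = (A', B', C')" by (cases "bqf_comp Q V")
  define r where "r = bqf_root Q"
  have A'_eq: "A' = A*v1\<^sup>2 + B*v1*v3 + C*v3\<^sup>2"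
    and B'_eq: "B' = 2*A*v1*v2 + B*(v1*v4 + v2*v3) + 2*C*v3*v4"
    using Q' unfolding Q V by auto
  have C: "C = - A * r\<^sup>2 - B * r"
    using bqf_root_is_root[of Q] A D unfolding Q r_def bqf_eval_def by simp
  have "v1 - v3 * r \<noteq> 0"
  proof
    assume "v1 - v3 * r = 0"
    then have "A' = v3\<^sup>2 * (A * r\<^sup>2 + B * r + C)"
      unfolding A'_eq by (simp add: power2_eq_square algebra_simps)
    then show False using A' Q' C by simp
  qed
  define t where "t = (v4 * r - v2) / (v1 - v3 * r)"
  have "(2 * A' * t + B') * (v1 - v3 * r) = (2 * A * r + B) * (v1 - v3 * r) * mdet V"
    using \<open>v1 - v3 * r \<noteq> 0\<close> unfolding t_def A'_eq B'_eq C V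
    by (simp add: field_simps power2_eq_square)
  then have "2 * A' * t + B' = 2 * A * r + B"
    using \<open>v1 - v3 * r \<noteq> 0\<close> det by simp
  also have "\<dots> = sqrt (bqf_disc (A', B', C'))"
    using bqf_root_iff[of A r B C] bqf_disc_comp[of Q V] A det Q' unfolding Q r_def by simp
  finally have "t = bqf_root (bqf_comp Q V)"
    using bqf_root_iff[of A' t B' C'] A' Q' by simp
  then show ?thesis
    using \<open>v1 - v3 * r \<noteq> 0\<close> unfolding V r_def t_def by (simp add: algebra_simps)
qed

lemma bqf_of_mat_mconj: "bqf_of_mat (mconj V M) = bqf_comp (bqf_of_mat M) V"
  by (cases M; cases V) (simp add: mconj_def power2_eq_square algebra_simps)

lemma bqf_of_mat_minv: "bqf_of_mat (minv M) = bqf_neg (bqf_of_mat M)"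
  by (cases M) simp

lemma bqf_of_mat_mneg: "bqf_of_mat (mneg M) = bqf_neg (bqf_of_mat M)"
  by (cases M) simp

lemma bqf_disc_of_mat: "bqf_disc (bqf_of_mat M) = mtrace M ^ 2 - 4 * mdet M"
  by (cases M) (simp add: power2_eq_square algebra_simps)

lemma bqf_eval_of_mat_fixed: "fixed_by M x \<Longrightarrow> bqf_eval (bqf_of_mat M) x 1 = 0"
  by (cases M) (simp add: bqf_eval_def fixed_by_iff power2_eq_square algebra_simps del: moeb.simps)

section \<open>Hyperbolic forms\<close>

lemma hyperbolic_minv: "hyperbolic (minv M) \<longleftrightarrow> hyperbolic M"
  by (cases M) (simp add: hyperbolic_def add.commute)

lemma hyperbolic_mconj: "mdet V = 1 \<Longrightarrow> hyperbolic (mconj V M) \<longleftrightarrow> hyperbolic M"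
  by (simp add: hyperbolic_def mtrace_mconj)

lemma hyperbolic_iff_mtrace_sq: "hyperbolic M \<longleftrightarrow> 4 < mtrace M ^ 2"
  using abs_le_square_iff[of "mtrace M" 2] by (auto simp: hyperbolic_def not_le[symmetric])

lemma bqf_root_of_mat:
  "mdet (M2 a b c d) = 1 \<Longrightarrow> bqf_root (c, d - a, - b) = (a - d + sqrt ((a + d)\<^sup>2 - 4)) / (2 * c)"
proof -
  assume "mdet (M2 a b c d) = 1"
  then have "(d - a)\<^sup>2 - 4 * c * - b = (a + d)\<^sup>2 - 4"
    by (simp add: power2_eq_square algebra_simps)
  then show ?thesis by simp
qed

lemma hecke_mats_hyperbolic_bqf:
  assumes "M \<in> hecke_mats p" and "p \<ge> 3" and "hyperbolic M"
  shows "fst (bqf_of_mat M) \<noteq> 0" and "bqf_disc (bqf_of_mat M) > 0"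
proof -
  obtain a b c d where M: "M = M2 a b c d" by (cases M)
  show "fst (bqf_of_mat M) \<noteq> 0"
    using hecke_mats_hyperbolic_lower_left assms unfolding M by simp
  show "bqf_disc (bqf_of_mat M) > 0"
    using assms(3) hecke_mats_mdet[OF assms(1)]
    by (simp add: bqf_disc_of_mat hyperbolic_iff_mtrace_sq)
qed

lemma stab_generator_minv:
  assumes "stab_generator p x M"
  shows "stab_generator p x (minv M)"
  using assms hecke_mats_minv fixed_by_minv(1)[OF hecke_mats_mdet]
  unfolding stab_generator_def mzpow_minv by (metis minus_minus)

lemma stab_generator_mconj:
  assumes M: "stab_generator p x M" and V: "V \<in> hecke_mats p"
    and y: "moeb (minv V) (Some x) = Some y"
  shows "stab_generator p y (mconj V M)"
proof -
  have M_hecke: "M \<in> hecke_mats p" and "fixed_by M x"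
    and gen: "\<And>N. N \<in> hecke_mats p \<Longrightarrow> fixed_by N x \<Longrightarrow> \<exists>n. N = mzpow M n \<or> N = mneg (mzpow M n)"
    using M unfolding stab_generator_def by auto
  have det: "mdet V = 1" "mdet (minv V) = 1" using hecke_mats_mdet[OF V] by simp_all
  have y_x: "moeb (minv (minv V)) (Some y) = Some x" using moeb_minv_cancel[OF det(1) y] by simp
  have "\<exists>n. N = mzpow (mconj V M) n \<or> N = mneg (mzpow (mconj V M) n)"
    if N: "N \<in> hecke_mats p" "fixed_by N y" for N
  proof -
    have "fixed_by (mconj (minv V) N) x"
      using fixed_by_mconj[OF det(2) hecke_mats_mdet[OF N(1)] N(2) y_x] .
    then obtain n where "mconj (minv V) N = mzpow M n \<or> mconj (minv V) N = mneg (mzpow M n)"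
      using gen hecke_mats_mconj[OF hecke_mats_minv[OF V] N(1)] by blast
    then have "N = mconj V (mzpow M n) \<or> N = mconj V (mneg (mzpow M n))"
      using mconj_mconj_minv[OF det(1)] by metis
    then show ?thesis by (auto simp: mconj_mzpow[OF det(1)] mconj_mneg)
  qed
  moreover have "fixed_by (mconj V M) y"
    using fixed_by_mconj[OF det(1) hecke_mats_mdet[OF M_hecke] \<open>fixed_by M x\<close> y] .
  ultimately show ?thesis
    unfolding stab_generator_def using hecke_mats_mconj[OF V M_hecke] by blast
qed

lemma stab_generator_unique:
  assumes M: "stab_generator p x M" and M': "stab_generator p x M'" and "hyperbolic M"
  shows "M' = M \<or> M' = mneg M \<or> M' = minv M \<or> M' = mneg (minv M)"
proof -
  have hecke: "M \<in> hecke_mats p" "M' \<in> hecke_mats p" and fixed: "fixed_by M x" "fixed_by M' x"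
    using M M' unfolding stab_generator_def by auto
  note det = hecke_mats_mdet[OF hecke(1)] hecke_mats_mdet[OF hecke(2)]
  obtain n where n: "M' = mzpow M n \<or> M' = mneg (mzpow M n)"
    using M hecke(2) fixed(2) unfolding stab_generator_def by blast
  obtain k where k: "M = mzpow M' k \<or> M = mneg (mzpow M' k)"
    using M' hecke(1) fixed(1) unfolding stab_generator_def by blast
  have "log_multiplier M' x = n * log_multiplier M x"
    using n log_multiplier_mzpow[OF det(1) fixed(1)]
    by (elim disjE) (simp_all add: log_multiplier_mneg)
  moreover have "log_multiplier M x = k * log_multiplier M' x"
    using k log_multiplier_mzpow[OF det(2) fixed(2)]
    by (elim disjE) (simp_all add: log_multiplier_mneg)
  moreover have "log_multiplier M x \<noteq> 0"
    using \<open>hyperbolic M\<close> hyperbolic_iff_multiplier[OF det(1) fixed(1)]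
      log_multiplier_eq_0_iff[OF fixed(1)] by simp
  ultimately have "real_of_int (k * n) = 1" by (simp add: algebra_simps)
  then have "k * n = 1" by (simp only: of_int_eq_1_iff)
  then have "n = 1 \<or> n = -1" by (auto simp: zmult_eq_1_iff)
  then show ?thesis using n by (auto simp: mzpow_def)
qed

definition hyp_form :: "nat \<Rightarrow> real \<Rightarrow> bqf \<Rightarrow> bool" where
  "hyp_form p \<alpha> Q \<longleftrightarrow>
     (\<exists>M. stab_generator p \<alpha> M \<and> hyperbolic M \<and> Q = bqf_of_mat M \<and> \<alpha> = bqf_root Q)"

lemma hyp_bqf_eq_The:
  assumes "p \<ge> 3"
  shows "hyp_bqf p \<alpha> = (THE Q. hyp_form p \<alpha> Q)"
  unfolding hyp_bqf_def
proof (intro arg_cong[where f = The] ext iffI)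
  fix Q
  assume "\<exists>a b c d. stab_generator p \<alpha> (M2 a b c d) \<and> c \<noteq> 0 \<and> (a + d)\<^sup>2 - 4 > 0 \<and>
            \<alpha> = (a - d + sqrt ((a + d)\<^sup>2 - 4)) / (2 * c) \<and> Q = (c, d - a, - b)"
  then obtain a b c d where gen: "stab_generator p \<alpha> (M2 a b c d)" and "(a + d)\<^sup>2 - 4 > 0"
    and "\<alpha> = (a - d + sqrt ((a + d)\<^sup>2 - 4)) / (2 * c)" and "Q = (c, d - a, - b)"
    by blast
  moreover have "mdet (M2 a b c d) = 1"
    using gen hecke_mats_mdet unfolding stab_generator_def by blast
  ultimately show "hyp_form p \<alpha> Q"
    unfolding hyp_form_def hyperbolic_iff_mtrace_sq
    by (intro exI[of _ "M2 a b c d"]) (simp add: bqf_root_of_mat del: bqf_root.simps)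
next
  fix Q
  assume "hyp_form p \<alpha> Q"
  then obtain M where gen: "stab_generator p \<alpha> M" and hyp: "hyperbolic M"
    and Q: "Q = bqf_of_mat M" "\<alpha> = bqf_root Q"
    unfolding hyp_form_def by blast
  obtain a b c d where M: "M = M2 a b c d" by (cases M)
  have "M \<in> hecke_mats p" using gen unfolding stab_generator_def by blast
  then have "c \<noteq> 0" and det: "mdet (M2 a b c d) = 1"
    using hecke_mats_hyperbolic_lower_left[OF _ assms] hyp hecke_mats_mdet unfolding M by blast+
  then show "\<exists>a b c d. stab_generator p \<alpha> (M2 a b c d) \<and> c \<noteq> 0 \<and> (a + d)\<^sup>2 - 4 > 0 \<and>
            \<alpha> = (a - d + sqrt ((a + d)\<^sup>2 - 4)) / (2 * c) \<and> Q = (c, d - a, - b)"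
    using gen hyp Q unfolding M hyperbolic_iff_mtrace_sq
    by (intro exI[of _ a] exI[of _ b] exI[of _ c] exI[of _ d])
      (simp add: bqf_root_of_mat[OF det] del: bqf_root.simps)
qed

lemma hyp_fixed_point_expanding:
  assumes "hyp_fixed_point p \<alpha>"
  obtains M where "M \<in> hecke_mats p" "fixed_by M \<alpha>" "1 < \<bar>multiplier M \<alpha>\<bar>"
proof -
  obtain M where M: "M \<in> hecke_mats p" "hyperbolic M" "fixed_by M \<alpha>"
    using assms unfolding hyp_fixed_point_def by blast
  note det = hecke_mats_mdet[OF M(1)]
  have "\<bar>multiplier M \<alpha>\<bar> \<noteq> 1" using M(2) hyperbolic_iff_multiplier[OF det M(3)] by simp
  show ?thesis
  proof (cases "1 < \<bar>multiplier M \<alpha>\<bar>")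
    case True
    then show ?thesis using that M by blast
  next
    case False
    then have "1 < \<bar>multiplier (minv M) \<alpha>\<bar>"
      using \<open>\<bar>multiplier M \<alpha>\<bar> \<noteq> 1\<close> multiplier_nonzero[OF M(3)] fixed_by_minv(2)[OF det M(3)]
      by (simp add: abs_divide less_divide_eq)
    then show ?thesis using that hecke_mats_minv[OF M(1)] fixed_by_minv(1)[OF det M(3)] by blast
  qed
qed

lemma hyp_form_exists:
  assumes p: "p \<ge> 3" and "hyp_fixed_point p \<alpha>"
  shows "\<exists>Q. hyp_form p \<alpha> Q"
proof -
  obtain M1 where "M1 \<in> hecke_mats p" "fixed_by M1 \<alpha>" "1 < \<bar>multiplier M1 \<alpha>\<bar>"
    using hyp_fixed_point_expanding[OF assms(2)] .
  then interpret hyperbolic_stabilizer p \<alpha> M1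
    using p by unfold_locales
  obtain M where gen: "stab_generator p \<alpha> M" and "0 < log_multiplier M \<alpha>"
    by (rule stab_generator_exists)
  moreover have M: "M \<in> hecke_mats p" "fixed_by M \<alpha>"
    using gen unfolding stab_generator_def by auto
  ultimately have hyp: "hyperbolic M"
    using hyperbolic_iff_multiplier[OF hecke_mats_mdet[OF M(1)] M(2)]
      log_multiplier_pos_iff[OF M(2)] by simp
  have "\<alpha> = bqf_root (bqf_of_mat M) \<or> \<alpha> = bqf_root (bqf_of_mat (minv M))"
    using bqf_roots[OF hecke_mats_hyperbolic_bqf(1)[OF M(1) p hyp] bqf_eval_of_mat_fixed[OF M(2)]]
    by (simp add: bqf_of_mat_minv)
  then show ?thesis
    using gen stab_generator_minv[OF gen] hyp hyperbolic_minv[of M]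
    unfolding hyp_form_def by blast
qed

lemma hyp_form_unique:
  assumes p: "p \<ge> 3" and "hyp_form p \<alpha> Q" and "hyp_form p \<alpha> Q'"
  shows "Q' = Q"
proof -
  obtain M where gen: "stab_generator p \<alpha> M" and hyp: "hyperbolic M"
    and Q: "Q = bqf_of_mat M" "\<alpha> = bqf_root Q"
    using assms(2) unfolding hyp_form_def by blast
  obtain M' where gen': "stab_generator p \<alpha> M'" and Q': "Q' = bqf_of_mat M'" "\<alpha> = bqf_root Q'"
    using assms(3) unfolding hyp_form_def by blast
  have "Q' = Q \<or> Q' = bqf_neg Q"
    using stab_generator_unique[OF gen gen' hyp] Q(1) Q'(1)
    by (auto simp: bqf_of_mat_minv bqf_of_mat_mneg)
  moreover have "M \<in> hecke_mats p" using gen unfolding stab_generator_def by blast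
  then have "bqf_root (bqf_neg Q) \<noteq> bqf_root Q"
    using bqf_root_neg_neq hecke_mats_hyperbolic_bqf[OF _ p hyp] Q(1) by blast
  ultimately show ?thesis using Q(2) Q'(2) by auto
qed

lemma hyp_bqf_eqI:
  assumes p: "p \<ge> 3" and Q: "hyp_form p \<alpha> Q"
  shows "hyp_bqf p \<alpha> = Q"
  unfolding hyp_bqf_eq_The[OF p] using Q hyp_form_unique[OF p Q] by (rule the_equality)

lemma hyp_form_hyp_bqf:
  assumes "p \<ge> 3" and "hyp_fixed_point p \<alpha>"
  shows "hyp_form p \<alpha> (hyp_bqf p \<alpha>)"
proof -
  obtain Q where "hyp_form p \<alpha> Q" using hyp_form_exists[OF assms] ..
  then show ?thesis using hyp_bqf_eqI[OF assms(1)] by simp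
qed

lemma hyp_formD:
  assumes "p \<ge> 3" and "hyp_form p \<alpha> Q"
  shows "fst Q \<noteq> 0" and "bqf_disc Q > 0" and "bqf_root Q = \<alpha>"
proof -
  obtain M where "M \<in> hecke_mats p" "hyperbolic M" "Q = bqf_of_mat M" "\<alpha> = bqf_root Q"
    using assms(2) unfolding hyp_form_def stab_generator_def by blast
  then show "fst Q \<noteq> 0" "bqf_disc Q > 0" "bqf_root Q = \<alpha>"
    using hecke_mats_hyperbolic_bqf[OF _ assms(1)] by simp_all
qed

lemma hyp_form_bqf_comp:
  assumes p: "p \<ge> 3" and "hyp_form p \<alpha> Q" and V: "V \<in> hecke_mats p"
    and \<beta>: "moeb (minv V) (Some \<alpha>) = Some \<beta>"
  shows "hyp_form p \<beta> (bqf_comp Q V)"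
proof -
  obtain M where gen: "stab_generator p \<alpha> M" and hyp: "hyperbolic M" and Q: "Q = bqf_of_mat M"
    using assms(2) unfolding hyp_form_def by blast
  have det: "mdet V = 1" using hecke_mats_mdet[OF V] .
  have gen': "stab_generator p \<beta> (mconj V M)" using stab_generator_mconj[OF gen V \<beta>] .
  have hyp': "hyperbolic (mconj V M)" using hyp hyperbolic_mconj[OF det] by simp
  have "mconj V M \<in> hecke_mats p" using gen' unfolding stab_generator_def by blast
  then have "fst (bqf_comp Q V) \<noteq> 0"
    using hecke_mats_hyperbolic_bqf(1)[OF _ p hyp'] unfolding Q bqf_of_mat_mconj by blast
  then have "\<beta> = bqf_root (bqf_comp Q V)"
    using bqf_root_comp[OF hyp_formD(1,2)[OF p assms(2)] det] hyp_formD(3)[OF p assms(2)] \<beta> by simp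
  then show ?thesis
    using gen' hyp' bqf_of_mat_mconj[of V M] unfolding hyp_form_def Q
    by (intro exI[of _ "mconj V M"]) simp
qed

theorem lemma3p2:
  fixes p :: nat and \<alpha> \<beta> :: real and V :: mat2
  assumes "p \<ge> 3"
    and "hyp_fixed_point p \<alpha>" and "hyp_fixed_point p \<beta>"
    and "V \<in> hecke_mats p"
  shows "hyp_bqf p \<beta> = bqf_comp (hyp_bqf p \<alpha>) V \<longleftrightarrow>
         Some \<beta> = moeb (minv V) (Some \<alpha>)"
proof -
  note Q\<alpha> = hyp_form_hyp_bqf[OF assms(1,2)] and Q\<beta> = hyp_form_hyp_bqf[OF assms(1,3)]
  show ?thesis
  proof
    assume "hyp_bqf p \<beta> = bqf_comp (hyp_bqf p \<alpha>) V"
    then have "moeb (minv V) (Some (bqf_root (hyp_bqf p \<alpha>))) = Some (bqf_root (hyp_bqf p \<beta>))"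
      using bqf_root_comp[OF hyp_formD(1,2)[OF assms(1) Q\<alpha>] hecke_mats_mdet[OF assms(4)]]
        hyp_formD(1)[OF assms(1) Q\<beta>] by simp
    then show "Some \<beta> = moeb (minv V) (Some \<alpha>)"
      using hyp_formD(3)[OF assms(1) Q\<alpha>] hyp_formD(3)[OF assms(1) Q\<beta>] by simp
  next
    assume "Some \<beta> = moeb (minv V) (Some \<alpha>)"
    then have "hyp_form p \<beta> (bqf_comp (hyp_bqf p \<alpha>) V)"
      using hyp_form_bqf_comp[OF assms(1) Q\<alpha> assms(4)] by simp
    then show "hyp_bqf p \<beta> = bqf_comp (hyp_bqf p \<alpha>) V"
      using hyp_bqf_eqI[OF assms(1)] by blast
  qed
qed

end
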